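(* Let $Q$ be a finite connected quandle, $S$ a set, $\theta:Q\times Q\to\mathrm{Sym}_S$ a quandle cocycle and $E=Q\times_\theta S$. The following are equivalent: (i) $\theta$ is cohomologous to the trivial cocycle $\mathbf{1}$; (ii) $|u^{\mathrm{LMlt}(E)}|=|Q|$ for every $u\in E$; (iii) $Q\times_\theta S\cong Q\times_{\mathbf{1}}S$ as quandles.
   Context: A quandle is a set $Q$ with a binary operation $*$ such that every left translation $L_x:y\mapsto x*y$ is bijective, $x*(y*z)=(x*y)*(x*z)$ and $x*x=x$. $\mathrm{LMlt}(Q)=\langle L_x:x\in Q\rangle$; $Q$ is connected if $\mathrm{LMlt}(Q)$ is transitive; $u^{\mathrm{LMlt}(E)}$ denotes the orbit of $u$. A quandle cocycle with values in $\mathrm{Sym}_S$ is $\theta:Q\times Q\to\mathrm{Sym}_S$ with $\theta_{x*y,x*z}\theta_{x,z}=\theta_{x,y*z}\theta_{y,z}$ and $\theta_{x,x}=1$; $\theta$ is cohomologous to the trivial cocycle $\mathbf{1}$ (constantly the identity) if there is $\gamma:Q\to\mathrm{Sym}_S$ with $\theta_{x,y}=\gamma_{x*y}\gamma_y^{-1}$ for all $x,y$. $Q\times_\theta S$ is the quandle on $Q\times S$ with $(x,a)*(y,b)=(x*y,\theta_{x,y}(b))$; in particular $Q\times_{\mathbf{1}}S$ is $(x,a)*(y,b)=(x*y,b)$. *)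

theory Defs
  imports "HOL-Combinatorics.Permutations"
begin

definition quandle :: "'a set \<Rightarrow> ('a \<Rightarrow> 'a \<Rightarrow> 'a) \<Rightarrow> bool" where
  "quandle Q op \<longleftrightarrow>
     (\<forall>x\<in>Q. \<forall>y\<in>Q. op x y \<in> Q) \<and>
     (\<forall>x\<in>Q. bij_betw (op x) Q Q) \<and>
     (\<forall>x\<in>Q. \<forall>y\<in>Q. \<forall>z\<in>Q. op x (op y z) = op (op x y) (op x z)) \<and>
     (\<forall>x\<in>Q. op x x = x)"

text \<open>Orbit of u under LMlt(Q) = the group generated by the left translations L_x, x in Q
  (closure of u under all L_x and their inverses on Q).\<close>
inductive_set lmlt_orbit :: "'a set \<Rightarrow> ('a \<Rightarrow> 'a \<Rightarrow> 'a) \<Rightarrow> 'a \<Rightarrow> 'a set"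
  for Q op u where
  base: "u \<in> lmlt_orbit Q op u"
| left: "\<lbrakk>v \<in> lmlt_orbit Q op u; x \<in> Q\<rbrakk> \<Longrightarrow> op x v \<in> lmlt_orbit Q op u"
| left_inv: "\<lbrakk>v \<in> lmlt_orbit Q op u; x \<in> Q; w \<in> Q; op x w = v\<rbrakk> \<Longrightarrow> w \<in> lmlt_orbit Q op u"

definition connected_quandle :: "'a set \<Rightarrow> ('a \<Rightarrow> 'a \<Rightarrow> 'a) \<Rightarrow> bool" where
  "connected_quandle Q op \<longleftrightarrow> quandle Q op \<and> (\<forall>x\<in>Q. lmlt_orbit Q op x = Q)"

definition quandle_cocycle ::
  "'a set \<Rightarrow> ('a \<Rightarrow> 'a \<Rightarrow> 'a) \<Rightarrow> 'b set \<Rightarrow> ('a \<Rightarrow> 'a \<Rightarrow> 'b \<Rightarrow> 'b) \<Rightarrow> bool" where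
  "quandle_cocycle Q op S \<theta> \<longleftrightarrow>
     (\<forall>x\<in>Q. \<forall>y\<in>Q. \<theta> x y permutes S) \<and>
     (\<forall>x\<in>Q. \<forall>y\<in>Q. \<forall>z\<in>Q. \<theta> (op x y) (op x z) \<circ> \<theta> x z = \<theta> x (op y z) \<circ> \<theta> y z) \<and>
     (\<forall>x\<in>Q. \<theta> x x = id)"

definition cohomologous_trivial ::
  "'a set \<Rightarrow> ('a \<Rightarrow> 'a \<Rightarrow> 'a) \<Rightarrow> 'b set \<Rightarrow> ('a \<Rightarrow> 'a \<Rightarrow> 'b \<Rightarrow> 'b) \<Rightarrow> bool" where
  "cohomologous_trivial Q op S \<theta> \<longleftrightarrow>
     (\<exists>\<gamma>. (\<forall>x\<in>Q. \<gamma> x permutes S) \<and>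
          (\<forall>x\<in>Q. \<forall>y\<in>Q. \<theta> x y = \<gamma> (op x y) \<circ> inv (\<gamma> y)))"

definition ext_op :: "('a \<Rightarrow> 'a \<Rightarrow> 'a) \<Rightarrow> ('a \<Rightarrow> 'a \<Rightarrow> 'b \<Rightarrow> 'b) \<Rightarrow> ('a \<times> 'b) \<Rightarrow> ('a \<times> 'b) \<Rightarrow> ('a \<times> 'b)" where
  "ext_op op \<theta> p q = (op (fst p) (fst q), \<theta> (fst p) (fst q) (snd q))"

definition quandle_iso :: "'a set \<Rightarrow> ('a \<Rightarrow> 'a \<Rightarrow> 'a) \<Rightarrow> 'c set \<Rightarrow> ('c \<Rightarrow> 'c \<Rightarrow> 'c) \<Rightarrow> ('a \<Rightarrow> 'c) \<Rightarrow> bool" where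
  "quandle_iso A opA B opB f \<longleftrightarrow> bij_betw f A B \<and> (\<forall>x\<in>A. \<forall>y\<in>A. f (opA x y) = opB (f x) (f y))"

definition quandle_isomorphic :: "'a set \<Rightarrow> ('a \<Rightarrow> 'a \<Rightarrow> 'a) \<Rightarrow> 'c set \<Rightarrow> ('c \<Rightarrow> 'c \<Rightarrow> 'c) \<Rightarrow> bool" where
  "quandle_isomorphic A opA B opB \<longleftrightarrow> (\<exists>f. quandle_iso A opA B opB f)"

end

theory Submission
  imports Defs
begin

text \<open>
  The projection \<open>fst\<close> maps the orbit of \<open>(x, a)\<close> in \<open>E = Q \<times>\<^sub>\<theta> S\<close> onto the orbit of \<open>x\<close>,
  which is all of \<open>Q\<close> by connectivity. So the orbit has \<open>|Q|\<close> elements iff it meets every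
  fibre \<open>{z} \<times> S\<close> exactly once, i.e. iff it is the graph of a map \<open>z \<mapsto> \<gamma>\<^sub>z a\<close>. As the orbits
  partition \<open>E\<close>, every \<open>\<gamma>\<^sub>z\<close> is a permutation of \<open>S\<close>, and closure of the orbit under the left
  translations of \<open>E\<close> reads \<open>\<theta>\<^sub>x\<^sub>,\<^sub>y \<circ> \<gamma>\<^sub>y = \<gamma>\<^sub>x\<^sub>*\<^sub>y\<close>, i.e. \<open>\<theta>\<close> is a coboundary. Conversely, a
  coboundary \<open>\<gamma>\<close> yields the isomorphism \<open>(x, s) \<mapsto> (x, \<gamma>\<^sub>x\<^sup>-\<^sup>1 s)\<close> onto the trivial extension,
  whose orbits are the sets \<open>Q \<times> {a}\<close>. Only closure of \<open>Q\<close>, connectivity and the fact that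
  each \<open>\<theta>\<^sub>x\<^sub>,\<^sub>y\<close> permutes \<open>S\<close> are needed.
\<close>

lemma lmlt_orbit_subset:
  assumes closed: "\<forall>x\<in>A. \<forall>y\<in>A. op x y \<in> A" and "u \<in> A"
  shows "lmlt_orbit A op u \<subseteq> A"
proof
  fix v assume "v \<in> lmlt_orbit A op u"
  then show "v \<in> A" by induction (use closed \<open>u \<in> A\<close> in auto)
qed

lemma lmlt_orbit_trans:
  assumes "v \<in> lmlt_orbit A op u" and "w \<in> lmlt_orbit A op v"
  shows "w \<in> lmlt_orbit A op u"
  using assms(2,1) by induction (auto intro: lmlt_orbit.intros)

lemma lmlt_orbit_sym:
  assumes closed: "\<forall>x\<in>A. \<forall>y\<in>A. op x y \<in> A" and "u \<in> A"
    and "v \<in> lmlt_orbit A op u"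
  shows "u \<in> lmlt_orbit A op v"
  using \<open>v \<in> lmlt_orbit A op u\<close>
proof induction
  case base
  show ?case by (rule lmlt_orbit.base)
next
  case (left v x)
  have "v \<in> A" using lmlt_orbit_subset[OF closed \<open>u \<in> A\<close>] left.hyps(1) by blast
  then have "v \<in> lmlt_orbit A op (op x v)"
    using lmlt_orbit.left_inv[OF lmlt_orbit.base \<open>x \<in> A\<close>] by blast
  then show ?case using lmlt_orbit_trans left.IH by metis
next
  case (left_inv v x w)
  have "v \<in> lmlt_orbit A op w"
    using lmlt_orbit.left[OF lmlt_orbit.base \<open>x \<in> A\<close>] \<open>op x w = v\<close> by metis
  then show ?case using lmlt_orbit_trans left_inv.IH by metis
qed

lemma lmlt_orbit_eq:
  assumes closed: "\<forall>x\<in>A. \<forall>y\<in>A. op x y \<in> A" and "u \<in> A"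
    and "v \<in> lmlt_orbit A op u"
  shows "lmlt_orbit A op v = lmlt_orbit A op u"
proof
  show "lmlt_orbit A op v \<subseteq> lmlt_orbit A op u"
    using lmlt_orbit_trans[OF \<open>v \<in> lmlt_orbit A op u\<close>] by blast
  have "u \<in> lmlt_orbit A op v" by (rule lmlt_orbit_sym[OF assms])
  then show "lmlt_orbit A op u \<subseteq> lmlt_orbit A op v"
    using lmlt_orbit_trans[of u A op v] by blast
qed

lemma lmlt_orbit_hom_image_subset:
  assumes closed: "\<forall>x\<in>A. \<forall>y\<in>A. opA x y \<in> A" and "u \<in> A"
    and maps: "f ` A \<subseteq> B" and hom: "\<forall>x\<in>A. \<forall>y\<in>A. f (opA x y) = opB (f x) (f y)"
  shows "f ` lmlt_orbit A opA u \<subseteq> lmlt_orbit B opB (f u)"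
proof clarify
  fix v assume "v \<in> lmlt_orbit A opA u"
  then show "f v \<in> lmlt_orbit B opB (f u)"
  proof induction
    case base
    show ?case by (rule lmlt_orbit.base)
  next
    case (left v x)
    have "v \<in> A" using lmlt_orbit_subset[OF closed \<open>u \<in> A\<close>] left.hyps(1) by blast
    then have "f (opA x v) = opB (f x) (f v)" using hom \<open>x \<in> A\<close> by blast
    then show ?case using lmlt_orbit.left[OF left.IH] maps \<open>x \<in> A\<close> by auto
  next
    case (left_inv v x w)
    have "opB (f x) (f w) = f v" using hom \<open>x \<in> A\<close> \<open>w \<in> A\<close> \<open>opA x w = v\<close> by metis
    then show ?case using lmlt_orbit.left_inv[OF left_inv.IH] maps \<open>x \<in> A\<close> \<open>w \<in> A\<close> by auto
  qed
qed

lemma ext_op_closed: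
  assumes "\<forall>x\<in>Q. \<forall>y\<in>Q. op x y \<in> Q" and "\<forall>x\<in>Q. \<forall>y\<in>Q. \<theta> x y permutes S"
  shows "\<forall>p\<in>Q \<times> S. \<forall>q\<in>Q \<times> S. ext_op op \<theta> p q \<in> Q \<times> S"
  using assms by (auto simp: ext_op_def permutes_in_image)

lemma lmlt_orbit_trivial_ext:
  assumes closed: "\<forall>x\<in>Q. \<forall>y\<in>Q. op x y \<in> Q" and "x \<in> Q" and "a \<in> S"
  shows "lmlt_orbit (Q \<times> S) (ext_op op (\<lambda>_ _. id)) (x, a) = lmlt_orbit Q op x \<times> {a}"
proof
  show "lmlt_orbit (Q \<times> S) (ext_op op (\<lambda>_ _. id)) (x, a) \<subseteq> lmlt_orbit Q op x \<times> {a}"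
  proof
    fix p assume "p \<in> lmlt_orbit (Q \<times> S) (ext_op op (\<lambda>_ _. id)) (x, a)"
    then show "p \<in> lmlt_orbit Q op x \<times> {a}"
      by induction (auto simp: ext_op_def intro: lmlt_orbit.intros)
  qed
  show "lmlt_orbit Q op x \<times> {a} \<subseteq> lmlt_orbit (Q \<times> S) (ext_op op (\<lambda>_ _. id)) (x, a)"
  proof clarify
    fix z assume "z \<in> lmlt_orbit Q op x"
    then show "(z, a) \<in> lmlt_orbit (Q \<times> S) (ext_op op (\<lambda>_ _. id)) (x, a)"
    proof induction
      case base
      show ?case by (rule lmlt_orbit.base)
    next
      case (left v y)
      then show ?case
        using lmlt_orbit.left[OF left.IH, of "(y, a)"] \<open>a \<in> S\<close> by (simp add: ext_op_def)
    next
      case (left_inv v y w)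
      then show ?case
        using lmlt_orbit.left_inv[OF left_inv.IH, of "(y, a)" "(w, a)"] \<open>a \<in> S\<close>
        by (simp add: ext_op_def)
    qed
  qed
qed

lemma fst_image_lmlt_orbit_ext:
  assumes closed: "\<forall>x\<in>Q. \<forall>y\<in>Q. op x y \<in> Q" and perm: "\<forall>x\<in>Q. \<forall>y\<in>Q. \<theta> x y permutes S"
    and "x \<in> Q" and "a \<in> S"
  shows "fst ` lmlt_orbit (Q \<times> S) (ext_op op \<theta>) (x, a) = lmlt_orbit Q op x"
proof
  have "fst ` lmlt_orbit (Q \<times> S) (ext_op op \<theta>) (x, a) \<subseteq> lmlt_orbit Q op (fst (x, a))"
    by (rule lmlt_orbit_hom_image_subset[OF ext_op_closed[OF closed perm]])
      (use \<open>x \<in> Q\<close> \<open>a \<in> S\<close> in \<open>auto simp: ext_op_def\<close>)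
  then show "fst ` lmlt_orbit (Q \<times> S) (ext_op op \<theta>) (x, a) \<subseteq> lmlt_orbit Q op x"
    by simp
  show "lmlt_orbit Q op x \<subseteq> fst ` lmlt_orbit (Q \<times> S) (ext_op op \<theta>) (x, a)"
  proof
    fix z assume "z \<in> lmlt_orbit Q op x"
    then have "\<exists>b\<in>S. (z, b) \<in> lmlt_orbit (Q \<times> S) (ext_op op \<theta>) (x, a)"
    proof induction
      case base
      show ?case using \<open>a \<in> S\<close> by (auto intro: lmlt_orbit.base)
    next
      case (left v y)
      then obtain b where "b \<in> S" and b: "(v, b) \<in> lmlt_orbit (Q \<times> S) (ext_op op \<theta>) (x, a)"
        by blast
      have "v \<in> Q" using lmlt_orbit_subset[OF closed \<open>x \<in> Q\<close>] left.hyps(1) by blast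
      then have "\<theta> y v b \<in> S" using perm \<open>y \<in> Q\<close> \<open>b \<in> S\<close> by (simp add: permutes_in_image)
      moreover have "(op y v, \<theta> y v b) \<in> lmlt_orbit (Q \<times> S) (ext_op op \<theta>) (x, a)"
        using lmlt_orbit.left[OF b, of "(y, b)"] \<open>y \<in> Q\<close> \<open>b \<in> S\<close> by (simp add: ext_op_def)
      ultimately show ?case by blast
    next
      case (left_inv v y w)
      then obtain b where "b \<in> S" and b: "(v, b) \<in> lmlt_orbit (Q \<times> S) (ext_op op \<theta>) (x, a)"
        by blast
      have p: "\<theta> y w permutes S" using perm \<open>y \<in> Q\<close> \<open>w \<in> Q\<close> by blast
      define c where "c = inv (\<theta> y w) b"
      have "c \<in> S" and "\<theta> y w c = b"
        using \<open>b \<in> S\<close> permutes_in_image[OF permutes_inv[OF p]] permutes_inverses[OF p]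
        by (auto simp: c_def)
      then have "(w, c) \<in> lmlt_orbit (Q \<times> S) (ext_op op \<theta>) (x, a)"
        using lmlt_orbit.left_inv[OF b, of "(y, c)" "(w, c)"] left_inv.hyps
        by (simp add: ext_op_def)
      then show ?case using \<open>c \<in> S\<close> by blast
    qed
    then show "z \<in> fst ` lmlt_orbit (Q \<times> S) (ext_op op \<theta>) (x, a)" by force
  qed
qed

lemma quandle_isomorphic_trivial_ext_if_cohomologous_trivial:
  assumes closed: "\<forall>x\<in>Q. \<forall>y\<in>Q. op x y \<in> Q" and "cohomologous_trivial Q op S \<theta>"
  shows "quandle_isomorphic (Q \<times> S) (ext_op op \<theta>) (Q \<times> S) (ext_op op (\<lambda>_ _. id))"
proof -
  obtain \<gamma> where perm: "\<forall>x\<in>Q. \<gamma> x permutes S"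
    and coboundary: "\<forall>x\<in>Q. \<forall>y\<in>Q. \<theta> x y = \<gamma> (op x y) \<circ> inv (\<gamma> y)"
    using \<open>cohomologous_trivial Q op S \<theta>\<close> unfolding cohomologous_trivial_def by blast
  define f where "f = (\<lambda>(x, s). (x, inv (\<gamma> x) s))"
  have "bij_betw f (Q \<times> S) (Q \<times> S)"
  proof (rule bij_betw_byWitness[where f' = "\<lambda>(x, s). (x, \<gamma> x s)"])
    show "\<forall>p\<in>Q \<times> S. (\<lambda>(x, s). (x, \<gamma> x s)) (f p) = p"
      and "\<forall>p\<in>Q \<times> S. f ((\<lambda>(x, s). (x, \<gamma> x s)) p) = p"
      using perm by (auto simp: f_def permutes_inverses)
    show "f ` (Q \<times> S) \<subseteq> Q \<times> S" and "(\<lambda>(x, s). (x, \<gamma> x s)) ` (Q \<times> S) \<subseteq> Q \<times> S"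
      using perm by (auto simp: f_def permutes_in_image permutes_inv)
  qed
  moreover have "f (ext_op op \<theta> (x, a) (y, b)) = ext_op op (\<lambda>_ _. id) (f (x, a)) (f (y, b))"
    if "x \<in> Q" and "y \<in> Q" for x y a b
  proof -
    have "\<gamma> (op x y) permutes S" using closed perm that by blast
    then have "inv (\<gamma> (op x y)) (\<theta> x y b) = inv (\<gamma> y) b"
      using coboundary that by (simp add: permutes_inverses)
    then show ?thesis by (simp add: f_def ext_op_def)
  qed
  ultimately show ?thesis
    unfolding quandle_isomorphic_def quandle_iso_def by blast
qed

lemma card_lmlt_orbit_ext_if_isomorphic_trivial_ext:
  assumes "finite Q" and closed: "\<forall>x\<in>Q. \<forall>y\<in>Q. op x y \<in> Q"
    and perm: "\<forall>x\<in>Q. \<forall>y\<in>Q. \<theta> x y permutes S"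
    and transitive: "\<forall>x\<in>Q. lmlt_orbit Q op x = Q"
    and "quandle_isomorphic (Q \<times> S) (ext_op op \<theta>) (Q \<times> S) (ext_op op (\<lambda>_ _. id))"
    and "u \<in> Q \<times> S"
  shows "finite (lmlt_orbit (Q \<times> S) (ext_op op \<theta>) u)
    \<and> card (lmlt_orbit (Q \<times> S) (ext_op op \<theta>) u) = card Q"
proof -
  let ?O = "lmlt_orbit (Q \<times> S) (ext_op op \<theta>) u"
  obtain f where bij: "bij_betw f (Q \<times> S) (Q \<times> S)"
    and hom: "\<forall>p\<in>Q \<times> S. \<forall>q\<in>Q \<times> S.
      f (ext_op op \<theta> p q) = ext_op op (\<lambda>_ _. id) (f p) (f q)"
    using \<open>quandle_isomorphic _ _ _ _\<close> by (auto simp: quandle_isomorphic_def quandle_iso_def)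
  obtain z a where "f u = (z, a)" "z \<in> Q" "a \<in> S"
    using bij_betw_apply[OF bij \<open>u \<in> Q \<times> S\<close>] by auto
  have "f ` ?O \<subseteq> lmlt_orbit (Q \<times> S) (ext_op op (\<lambda>_ _. id)) (f u)"
    by (rule lmlt_orbit_hom_image_subset[OF ext_op_closed[OF closed perm] \<open>u \<in> Q \<times> S\<close>])
      (use bij_betw_imp_surj_on[OF bij] hom in auto)
  also have "\<dots> = Q \<times> {a}"
    using lmlt_orbit_trivial_ext[OF closed \<open>z \<in> Q\<close> \<open>a \<in> S\<close>] transitive \<open>f u = (z, a)\<close> \<open>z \<in> Q\<close>
    by simp
  finally have image: "f ` ?O \<subseteq> Q \<times> {a}" .
  have "?O \<subseteq> Q \<times> S"
    by (rule lmlt_orbit_subset[OF ext_op_closed[OF closed perm] \<open>u \<in> Q \<times> S\<close>])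
  then have inj: "inj_on f ?O"
    by (rule inj_on_subset[OF bij_betw_imp_inj_on[OF bij]])
  have "finite ?O"
    using finite_subset[OF image] \<open>finite Q\<close> finite_imageD[OF _ inj] by blast
  moreover have "card ?O \<le> card Q"
    using card_mono[OF _ image] \<open>finite Q\<close> card_image[OF inj] by (simp add: card_cartesian_product)
  moreover have "card Q \<le> card ?O"
  proof -
    obtain x b where "u = (x, b)" "x \<in> Q" "b \<in> S" using \<open>u \<in> Q \<times> S\<close> by blast
    then have "fst ` ?O = Q"
      using fst_image_lmlt_orbit_ext[OF closed perm] transitive by simp
    then show ?thesis using card_image_le[OF \<open>finite ?O\<close>, of fst] by simp
  qed
  ultimately show ?thesis by simp
qed

locale orbits_are_graphs =
  fixes Q :: "'a set" and op :: "'a \<Rightarrow> 'a \<Rightarrow> 'a"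
    and S :: "'b set" and \<theta> :: "'a \<Rightarrow> 'a \<Rightarrow> 'b \<Rightarrow> 'b" and x\<^sub>0 :: 'a
  assumes closed: "\<forall>x\<in>Q. \<forall>y\<in>Q. op x y \<in> Q"
    and perm: "\<forall>x\<in>Q. \<forall>y\<in>Q. \<theta> x y permutes S"
    and transitive: "\<forall>x\<in>Q. lmlt_orbit Q op x = Q"
    and base_point: "x\<^sub>0 \<in> Q"
    and inj_fst: "\<forall>a\<in>S. inj_on fst (lmlt_orbit (Q \<times> S) (ext_op op \<theta>) (x\<^sub>0, a))"
begin

abbreviation orb :: "'a \<times> 'b \<Rightarrow> ('a \<times> 'b) set" where
  "orb u \<equiv> lmlt_orbit (Q \<times> S) (ext_op op \<theta>) u"

definition \<gamma> :: "'a \<Rightarrow> 'b \<Rightarrow> 'b" where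
  "\<gamma> z a = (if a \<in> S then THE b. (z, b) \<in> orb (x\<^sub>0, a) else a)"

lemma ext_closed: "\<forall>p\<in>Q \<times> S. \<forall>q\<in>Q \<times> S. ext_op op \<theta> p q \<in> Q \<times> S"
  using ext_op_closed[OF closed perm] .

lemma fst_image_orb: "z \<in> Q \<Longrightarrow> b \<in> S \<Longrightarrow> fst ` orb (z, b) = Q"
  using fst_image_lmlt_orbit_ext[OF closed perm] transitive by simp

lemma \<gamma>_eqI:
  assumes "a \<in> S" and "(z, b) \<in> orb (x\<^sub>0, a)"
  shows "\<gamma> z a = b"
proof -
  have "c = b" if "(z, c) \<in> orb (x\<^sub>0, a)" for c
    using inj_onD[OF inj_fst[rule_format, OF \<open>a \<in> S\<close>] _ that assms(2)] by simp
  then have "(THE b. (z, b) \<in> orb (x\<^sub>0, a)) = b"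
    using assms(2) by (rule the_equality[rotated])
  then show ?thesis
    using \<open>a \<in> S\<close> by (simp add: \<gamma>_def)
qed

lemma \<gamma>_in_orb:
  assumes "a \<in> S" and "z \<in> Q"
  shows "(z, \<gamma> z a) \<in> orb (x\<^sub>0, a)"
proof -
  have "z \<in> fst ` orb (x\<^sub>0, a)"
    using fst_image_orb[OF base_point \<open>a \<in> S\<close>] \<open>z \<in> Q\<close> by simp
  then obtain b where "(z, b) \<in> orb (x\<^sub>0, a)" by auto
  then show ?thesis using \<gamma>_eqI[OF \<open>a \<in> S\<close>] by simp
qed

lemma orb_\<gamma>: "z \<in> Q \<Longrightarrow> a \<in> S \<Longrightarrow> orb (z, \<gamma> z a) = orb (x\<^sub>0, a)"
  by (rule lmlt_orbit_eq[OF ext_closed _ \<gamma>_in_orb]) (use base_point in simp_all)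

lemma inj_on_\<gamma>:
  assumes "z \<in> Q"
  shows "inj_on (\<gamma> z) S"
proof (rule inj_onI)
  fix a a' assume "a \<in> S" "a' \<in> S" and "\<gamma> z a = \<gamma> z a'"
  then have "orb (x\<^sub>0, a) = orb (x\<^sub>0, a')"
    using orb_\<gamma>[OF \<open>z \<in> Q\<close>] by metis
  then have "\<gamma> x\<^sub>0 a = a'"
    using \<gamma>_eqI[OF \<open>a \<in> S\<close>] lmlt_orbit.base[of "(x\<^sub>0, a')"] by simp
  moreover have "\<gamma> x\<^sub>0 a = a" using \<gamma>_eqI[OF \<open>a \<in> S\<close> lmlt_orbit.base] .
  ultimately show "a = a'" by simp
qed

lemma \<gamma>_image:
  assumes "z \<in> Q"
  shows "\<gamma> z ` S = S"
proof
  show "\<gamma> z ` S \<subseteq> S"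
  proof clarify
    fix a assume "a \<in> S"
    then show "\<gamma> z a \<in> S"
      using \<gamma>_in_orb[OF _ \<open>z \<in> Q\<close>] lmlt_orbit_subset[OF ext_closed, of "(x\<^sub>0, a)"]
        base_point by auto
  qed
  show "S \<subseteq> \<gamma> z ` S"
  proof
    fix c assume "c \<in> S"
    then have "x\<^sub>0 \<in> fst ` orb (z, c)"
      using fst_image_orb[OF \<open>z \<in> Q\<close>] base_point by simp
    then obtain b where b: "(x\<^sub>0, b) \<in> orb (z, c)" by auto
    have "b \<in> S"
      using lmlt_orbit_subset[OF ext_closed, of "(z, c)"] b \<open>z \<in> Q\<close> \<open>c \<in> S\<close> by auto
    moreover have "(z, c) \<in> orb (x\<^sub>0, b)"
      using lmlt_orbit_sym[OF ext_closed _ b] \<open>z \<in> Q\<close> \<open>c \<in> S\<close> by simp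
    ultimately show "c \<in> \<gamma> z ` S" using \<gamma>_eqI[of b z c] by blast
  qed
qed

lemma \<gamma>_permutes: "z \<in> Q \<Longrightarrow> \<gamma> z permutes S"
  by (rule bij_imp_permutes) (simp_all add: bij_betw_def inj_on_\<gamma> \<gamma>_image, simp add: \<gamma>_def)

lemma cocycle_comp_\<gamma>:
  assumes "x \<in> Q" and "y \<in> Q"
  shows "\<theta> x y \<circ> \<gamma> y = \<gamma> (op x y)"
proof
  fix a
  show "(\<theta> x y \<circ> \<gamma> y) a = \<gamma> (op x y) a"
  proof (cases "a \<in> S")
    case True
    have "(op x y, \<theta> x y (\<gamma> y a)) \<in> orb (x\<^sub>0, a)"
      using lmlt_orbit.left[OF \<gamma>_in_orb[OF True \<open>y \<in> Q\<close>], of "(x, a)"] \<open>x \<in> Q\<close> True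
      by (simp add: ext_op_def)
    then show ?thesis using \<gamma>_eqI[OF True] by simp
  next
    case False
    then show ?thesis
      using permutes_not_in[of "\<theta> x y" S a] perm assms by (simp add: \<gamma>_def)
  qed
qed

lemma cohomologous_trivial: "cohomologous_trivial Q op S \<theta>"
  unfolding cohomologous_trivial_def
proof (intro exI conjI ballI)
  show "\<gamma> x permutes S" if "x \<in> Q" for x using \<gamma>_permutes[OF that] .
  fix x y assume "x \<in> Q" "y \<in> Q"
  have "\<theta> x y = \<theta> x y \<circ> (\<gamma> y \<circ> inv (\<gamma> y))"
    using permutes_inv_o(1)[OF \<gamma>_permutes[OF \<open>y \<in> Q\<close>]] by simp
  also have "\<dots> = \<gamma> (op x y) \<circ> inv (\<gamma> y)"
    by (simp only: o_assoc cocycle_comp_\<gamma>[OF \<open>x \<in> Q\<close> \<open>y \<in> Q\<close>])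
  finally show "\<theta> x y = \<gamma> (op x y) \<circ> inv (\<gamma> y)" .
qed

end

lemma cohomologous_trivial_if_card_lmlt_orbit_ext:
  assumes closed: "\<forall>x\<in>Q. \<forall>y\<in>Q. op x y \<in> Q"
    and perm: "\<forall>x\<in>Q. \<forall>y\<in>Q. \<theta> x y permutes S"
    and transitive: "\<forall>x\<in>Q. lmlt_orbit Q op x = Q"
    and card: "\<forall>u\<in>Q \<times> S. finite (lmlt_orbit (Q \<times> S) (ext_op op \<theta>) u)
      \<and> card (lmlt_orbit (Q \<times> S) (ext_op op \<theta>) u) = card Q"
  shows "cohomologous_trivial Q op S \<theta>"
proof (cases "Q = {}")
  case True
  then show ?thesis by (simp add: cohomologous_trivial_def)
next
  case False
  then obtain x\<^sub>0 where "x\<^sub>0 \<in> Q" by blast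
  have "inj_on fst (lmlt_orbit (Q \<times> S) (ext_op op \<theta>) (x\<^sub>0, a))" if "a \<in> S" for a
  proof (rule eq_card_imp_inj_on)
    show "finite (lmlt_orbit (Q \<times> S) (ext_op op \<theta>) (x\<^sub>0, a))"
      using card \<open>x\<^sub>0 \<in> Q\<close> that by blast
    show "card (fst ` lmlt_orbit (Q \<times> S) (ext_op op \<theta>) (x\<^sub>0, a))
      = card (lmlt_orbit (Q \<times> S) (ext_op op \<theta>) (x\<^sub>0, a))"
      using fst_image_lmlt_orbit_ext[OF closed perm \<open>x\<^sub>0 \<in> Q\<close> that] transitive card
        \<open>x\<^sub>0 \<in> Q\<close> that by simp
  qed
  then interpret orbits_are_graphs Q op S \<theta> x\<^sub>0
    using closed perm transitive \<open>x\<^sub>0 \<in> Q\<close> by unfold_locales simp_all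
  show ?thesis by (rule cohomologous_trivial)
qed

theorem corollary2p4:
  fixes Q :: "'a set" and op :: "'a \<Rightarrow> 'a \<Rightarrow> 'a"
    and S :: "'b set" and \<theta> :: "'a \<Rightarrow> 'a \<Rightarrow> 'b \<Rightarrow> 'b"
  assumes "finite Q"
    and "connected_quandle Q op"
    and "quandle_cocycle Q op S \<theta>"
  shows "(cohomologous_trivial Q op S \<theta> \<longleftrightarrow>
            (\<forall>u\<in>Q \<times> S. finite (lmlt_orbit (Q \<times> S) (ext_op op \<theta>) u)
                         \<and> card (lmlt_orbit (Q \<times> S) (ext_op op \<theta>) u) = card Q))
       \<and> (cohomologous_trivial Q op S \<theta> \<longleftrightarrow>
            quandle_isomorphic (Q \<times> S) (ext_op op \<theta>) (Q \<times> S) (ext_op op (\<lambda>_ _. id)))"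
proof -
  have closed: "\<forall>x\<in>Q. \<forall>y\<in>Q. op x y \<in> Q" and transitive: "\<forall>x\<in>Q. lmlt_orbit Q op x = Q"
    using \<open>connected_quandle Q op\<close> by (auto simp: connected_quandle_def quandle_def)
  have perm: "\<forall>x\<in>Q. \<forall>y\<in>Q. \<theta> x y permutes S"
    using \<open>quandle_cocycle Q op S \<theta>\<close> by (simp add: quandle_cocycle_def)
  note i_iii = quandle_isomorphic_trivial_ext_if_cohomologous_trivial[OF closed]
  note iii_ii = card_lmlt_orbit_ext_if_isomorphic_trivial_ext[OF \<open>finite Q\<close> closed perm transitive]
  note ii_i = cohomologous_trivial_if_card_lmlt_orbit_ext[OF closed perm transitive]
  show ?thesis using i_iii iii_ii ii_i by blast
qed

end
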